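(* Under the hypotheses that $(\mathcal G_A,p^A)$ and $(\mathcal G_B,p^B)$ are CPS's on the finite set $\Omega$ (satisfying the standing assumptions), each satisfying certainty reflection and being $1$-closed, and for any fixed event $E$ and $q_A,q_B\in[0,1]$: if $\omega\in C^\infty$, then $m(\omega)\subseteq C^\infty$.
   Context: $\Omega$ is a finite set; every subset is an event. A CPS is a pair $(\mathcal G,p)$ where $\mathcal G$ is a family of nonempty subsets of $\Omega$ and $p$ assigns to each $G\in\mathcal G$ a probability measure $p_G$ on $\Omega$ with $p_G(G)=1$ and $p_G(E)=p_G(F)p_F(E)$ whenever $E\subseteq F\subseteq G$, $F,G\in\mathcal G$. Standing assumption: each conditioning family is closed under unions and nonempty intersections and covers $\Omega$. Atom: $m_i(\omega)=\bigcap\{G\in\mathcal G_i:\omega\in G\}$; $m(\omega)=\bigcap\{G\in\mathcal G_A\cap\mathcal G_B:\omega\in G\}$. $(\mathcal G_i,p^i)$ is $1$-closed if every $L\subseteq G$ with $G\in\mathcal G_i$ and $p^i_G(L)=1$ belongs to $\mathcal G_i$. Certainty reflection: for every event $E$, $q\in[0,1]$, $\omega$: $p^i_{m_i(\omega)}(E)=q$ implies $p^i_{m_i(\omega)}(\{\omega':p^i_{m_i(\omega')}(E)=q\})=1$. $C_i(F)=\{\omega:p^i_{m_i(\omega)}(F)=1\}$. $A^0=\{\omega:p^A_{m_A(\omega)}(E)=q_A\}$, $B^0=\{\omega:p^B_{m_B(\omega)}(E)=q_B\}$, $A^{n+1}=A^n\cap C_A(B^n)$, $B^{n+1}=B^n\cap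 C_B(A^n)$, $C^\infty=\bigcap_{n\ge0}A^n\cap\bigcap_{n\ge0}B^n$. *)

theory Defs
  imports Complex_Main
begin

text \<open>The finite state space Omega is the universe of a finite type 'w.
  A conditioning family is a set of events; the CPS assigns to each
  conditioning event G a set function p G on events.\<close>

definition prob_measure :: "('w set \<Rightarrow> real) \<Rightarrow> bool" where
  "prob_measure \<mu> \<longleftrightarrow>
     (\<forall>E. 0 \<le> \<mu> E) \<and> \<mu> UNIV = 1 \<and>
     (\<forall>E F. E \<inter> F = {} \<longrightarrow> \<mu> (E \<union> F) = \<mu> E + \<mu> F)"

definition cps :: "'w set set \<Rightarrow> ('w set \<Rightarrow> 'w set \<Rightarrow> real) \<Rightarrow> bool" where
  "cps \<G> p \<longleftrightarrow>
     (\<forall>G\<in>\<G>. G \<noteq> {}) \<and>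
     (\<forall>G\<in>\<G>. prob_measure (p G) \<and> p G G = 1) \<and>
     (\<forall>E F G. E \<subseteq> F \<longrightarrow> F \<subseteq> G \<longrightarrow> F \<in> \<G> \<longrightarrow> G \<in> \<G> \<longrightarrow> p G E = p G F * p F E)"

definition standing :: "'w set set \<Rightarrow> bool" where
  "standing \<G> \<longleftrightarrow>
     (\<forall>F\<in>\<G>. \<forall>G\<in>\<G>. F \<union> G \<in> \<G>) \<and>
     (\<forall>F\<in>\<G>. \<forall>G\<in>\<G>. F \<inter> G \<noteq> {} \<longrightarrow> F \<inter> G \<in> \<G>) \<and>
     \<Union>\<G> = UNIV"

definition atom :: "'w set set \<Rightarrow> 'w \<Rightarrow> 'w set" where
  "atom \<G> \<omega> = \<Inter>{G\<in>\<G>. \<omega> \<in> G}"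

definition one_closed :: "'w set set \<Rightarrow> ('w set \<Rightarrow> 'w set \<Rightarrow> real) \<Rightarrow> bool" where
  "one_closed \<G> p \<longleftrightarrow> (\<forall>G\<in>\<G>. \<forall>L. L \<subseteq> G \<longrightarrow> p G L = 1 \<longrightarrow> L \<in> \<G>)"

definition certainty_reflection :: "'w set set \<Rightarrow> ('w set \<Rightarrow> 'w set \<Rightarrow> real) \<Rightarrow> bool" where
  "certainty_reflection \<G> p \<longleftrightarrow>
     (\<forall>E q \<omega>. 0 \<le> q \<longrightarrow> q \<le> 1 \<longrightarrow> p (atom \<G> \<omega>) E = q \<longrightarrow>
        p (atom \<G> \<omega>) {\<omega>'. p (atom \<G> \<omega>') E = q} = 1)"

definition certain :: "'w set set \<Rightarrow> ('w set \<Rightarrow> 'w set \<Rightarrow> real) \<Rightarrow> 'w set \<Rightarrow> 'w set" where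
  "certain \<G> p F = {\<omega>. p (atom \<G> \<omega>) F = 1}"

primrec AB_seq :: "'w set set \<Rightarrow> ('w set \<Rightarrow> 'w set \<Rightarrow> real) \<Rightarrow>
    'w set set \<Rightarrow> ('w set \<Rightarrow> 'w set \<Rightarrow> real) \<Rightarrow> 'w set \<Rightarrow> real \<Rightarrow> real \<Rightarrow> nat \<Rightarrow> 'w set \<times> 'w set" where
  "AB_seq GA pA GB pB E qA qB 0 =
     ({\<omega>. pA (atom GA \<omega>) E = qA}, {\<omega>. pB (atom GB \<omega>) E = qB})"
| "AB_seq GA pA GB pB E qA qB (Suc n) =
     (let (A, B) = AB_seq GA pA GB pB E qA qB n
      in (A \<inter> certain GA pA B, B \<inter> certain GB pB A))"

definition C_inf :: "'w set set \<Rightarrow> ('w set \<Rightarrow> 'w set \<Rightarrow> real) \<Rightarrow>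
    'w set set \<Rightarrow> ('w set \<Rightarrow> 'w set \<Rightarrow> real) \<Rightarrow> 'w set \<Rightarrow> real \<Rightarrow> real \<Rightarrow> 'w set" where
  "C_inf GA pA GB pB E qA qB =
     (\<Inter>n. fst (AB_seq GA pA GB pB E qA qB n)) \<inter> (\<Inter>n. snd (AB_seq GA pA GB pB E qA qB n))"

end

theory Submission
  imports Defs
begin

text \<open>Every state of C^\<infinity> makes both agents certain of C^\<infinity>: agent A is
  certain of each A^n by certainty reflection and of each B^n because the state lies
  in A^(n+1), and on a finite space finitely many certain events have a certain
  intersection. An event C that is certain at each of its points belongs to G_i by
  1-closedness: it is the union of the events m_i(\<omega>) \<inter> C, \<omega> \<in> C, each of which
  has conditional probability 1 given m_i(\<omega>). Hence C^\<infinity> is a common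
  conditioning event, and so contains the common atom of each of its points.\<close>

lemma prob_measure_add:
  assumes "prob_measure \<mu>" and "X \<inter> Y = {}" and "Z = X \<union> Y"
  shows "\<mu> Z = \<mu> X + \<mu> Y"
  using assms unfolding prob_measure_def by blast

lemma prob_measure_Compl:
  assumes "prob_measure \<mu>"
  shows "\<mu> (- X) = 1 - \<mu> X"
proof -
  have "\<mu> UNIV = \<mu> X + \<mu> (- X)"
    by (rule prob_measure_add[OF assms]) auto
  then show ?thesis
    using assms unfolding prob_measure_def by simp
qed

lemma prob_measure_diff_eq_0:
  assumes "prob_measure \<mu>" and "\<mu> Y = 1"
  shows "\<mu> (X - Y) = 0"
proof -
  have "\<mu> (- Y) = \<mu> (X - Y) + \<mu> (- Y - X)"
    by (rule prob_measure_add[OF assms(1)]) auto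
  moreover have "\<mu> (- Y) = 0"
    using prob_measure_Compl[OF assms(1)] assms(2) by simp
  moreover have "0 \<le> \<mu> (X - Y)" "0 \<le> \<mu> (- Y - X)"
    using assms(1) unfolding prob_measure_def by auto
  ultimately show ?thesis by linarith
qed

lemma prob_measure_Int_eq_1:
  assumes "prob_measure \<mu>" and "\<mu> X = 1" and "\<mu> Y = 1"
  shows "\<mu> (X \<inter> Y) = 1"
proof -
  have "\<mu> X = \<mu> (X \<inter> Y) + \<mu> (X - Y)"
    by (rule prob_measure_add[OF assms(1)]) auto
  then show ?thesis
    using assms(2) prob_measure_diff_eq_0[OF assms(1,3)] by simp
qed

lemma prob_measure_Inter_eq_1:
  assumes "finite S" and "prob_measure \<mu>" and "\<And>X. X \<in> S \<Longrightarrow> \<mu> X = 1"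
  shows "\<mu> (\<Inter>S) = 1"
  using assms
proof (induction S rule: finite_induct)
  case empty
  then show ?case unfolding prob_measure_def by simp
next
  case (insert X S)
  then show ?case using prob_measure_Int_eq_1[of \<mu> X "\<Inter>S"] by simp
qed

lemma standing_Union_mem:
  assumes "finite S" and "S \<noteq> {}" and "standing \<G>" and "S \<subseteq> \<G>"
  shows "\<Union>S \<in> \<G>"
  using assms
proof (induction S rule: finite_ne_induct)
  case (singleton X)
  then show ?case by simp
next
  case (insert X S)
  then show ?case unfolding standing_def by simp
qed

lemma standing_Inter_mem:
  assumes "finite S" and "S \<noteq> {}" and "standing \<G>" and "S \<subseteq> \<G>" and "\<omega> \<in> \<Inter>S"
  shows "\<Inter>S \<in> \<G>"
  using assms
proof (induction S rule: finite_ne_induct)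
  case (singleton X)
  then show ?case by simp
next
  case (insert X S)
  then have "\<Inter>S \<in> \<G>" and "X \<inter> \<Inter>S \<noteq> {}" by auto
  then show ?case using insert.prems unfolding standing_def by simp
qed

lemma mem_atom: "\<omega> \<in> atom \<G> \<omega>"
  unfolding atom_def by blast

lemma atom_mem_family:
  fixes \<G> :: "('w::finite) set set"
  assumes "standing \<G>"
  shows "atom \<G> \<omega> \<in> \<G>"
proof -
  have "\<omega> \<in> \<Union>\<G>" using assms unfolding standing_def by simp
  then have "{G \<in> \<G>. \<omega> \<in> G} \<noteq> {}" by blast
  then show ?thesis
    unfolding atom_def using standing_Inter_mem[OF _ _ assms, of _ \<omega>] by auto
qed

lemma atom_subset:
  assumes "G \<in> \<G>" and "\<omega> \<in> G"
  shows "atom \<G> \<omega> \<subseteq> G"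
  using assms unfolding atom_def by blast

lemma prob_measure_atom:
  fixes \<G> :: "('w::finite) set set"
  assumes "cps \<G> p" and "standing \<G>"
  shows "prob_measure (p (atom \<G> \<omega>))" and "p (atom \<G> \<omega>) (atom \<G> \<omega>) = 1"
  using assms atom_mem_family[OF assms(2)] unfolding cps_def by auto

definition self_evident :: "'w set set \<Rightarrow> ('w set \<Rightarrow> 'w set \<Rightarrow> real) \<Rightarrow> 'w set \<Rightarrow> bool" where
  "self_evident \<G> p C \<longleftrightarrow> C \<subseteq> certain \<G> p C"

lemma self_evident_mem_family:
  fixes \<G> :: "('w::finite) set set"
  assumes "cps \<G> p" and "standing \<G>" and "one_closed \<G> p"
    and "self_evident \<G> p C" and "C \<noteq> {}"
  shows "C \<in> \<G>"
proof -
  have piece_mem: "atom \<G> \<omega> \<inter> C \<in> \<G>" if "\<omega> \<in> C" for \<omega>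
  proof -
    have "p (atom \<G> \<omega>) C = 1"
      using assms(4) that unfolding self_evident_def certain_def by auto
    then have "p (atom \<G> \<omega>) (atom \<G> \<omega> \<inter> C) = 1"
      by (rule prob_measure_Int_eq_1[OF prob_measure_atom[OF assms(1,2)]])
    moreover have "atom \<G> \<omega> \<in> \<G>"
      using atom_mem_family[OF assms(2)] .
    ultimately show ?thesis
      using assms(3) unfolding one_closed_def by (meson Int_lower1)
  qed
  have "C = \<Union>((\<lambda>\<omega>. atom \<G> \<omega> \<inter> C) ` C)"
    using mem_atom[of _ \<G>] by auto
  also have "\<dots> \<in> \<G>"
    by (rule standing_Union_mem[OF _ _ assms(2)]) (use piece_mem assms(5) in auto)
  finally show ?thesis .
qed

lemma certainty_reflection_certain:
  assumes "certainty_reflection \<G> p" and "p (atom \<G> \<omega>) F = 1"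
  shows "p (atom \<G> \<omega>) (certain \<G> p F) = 1"
  using assms(1)[unfolded certainty_reflection_def, rule_format, where E = F and q = 1] assms(2)
  unfolding certain_def by simp

lemma AB_seq_swap:
  "AB_seq GB pB GA pA E qB qA n = prod.swap (AB_seq GA pA GB pB E qA qB n)"
  by (induction n) (auto simp: Let_def split: prod.split)

lemma C_inf_swap:
  "C_inf GB pB GA pA E qB qA = C_inf GA pA GB pB E qA qB"
  unfolding C_inf_def AB_seq_swap[of GB pB GA pA E qB qA] by (simp add: Int_commute)

lemma C_inf_self_evident_fst:
  fixes GA GB :: "('w::finite) set set"
  assumes "cps GA pA" and "standing GA" and "certainty_reflection GA pA"
    and "0 \<le> qA" and "qA \<le> 1"
  shows "self_evident GA pA (C_inf GA pA GB pB E qA qB)"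
  unfolding self_evident_def
proof
  define A where "A n = fst (AB_seq GA pA GB pB E qA qB n)" for n
  define B where "B n = snd (AB_seq GA pA GB pB E qA qB n)" for n
  have A_Suc: "A (Suc n) = A n \<inter> certain GA pA (B n)" for n
    unfolding A_def B_def by (simp add: split_def Let_def)
  fix \<omega> assume "\<omega> \<in> C_inf GA pA GB pB E qA qB"
  then have \<omega>_AB: "\<omega> \<in> A n" "\<omega> \<in> B n" for n
    unfolding C_inf_def A_def B_def by auto
  let ?\<mu> = "pA (atom GA \<omega>)"
  have \<mu>: "prob_measure ?\<mu>" using prob_measure_atom(1)[OF assms(1,2)] .
  have certain_B: "?\<mu> (B n) = 1" for n
    using \<omega>_AB(1)[of "Suc n"] unfolding A_Suc certain_def by simp
  have certain_A: "?\<mu> (A n) = 1" for n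
  proof (induction n)
    case 0
    have "?\<mu> E = qA" using \<omega>_AB(1)[of 0] unfolding A_def by simp
    then show ?case
      using assms(3-5) unfolding certainty_reflection_def A_def by simp
  next
    case (Suc n)
    then show ?case
      unfolding A_Suc
      using prob_measure_Int_eq_1[OF \<mu>] certainty_reflection_certain[OF assms(3) certain_B] by blast
  qed
  have "?\<mu> (\<Inter>(range A)) = 1" and "?\<mu> (\<Inter>(range B)) = 1"
    by (rule prob_measure_Inter_eq_1[OF _ \<mu>]; use certain_A certain_B in auto)+
  then have "?\<mu> (\<Inter>(range A) \<inter> \<Inter>(range B)) = 1"
    by (rule prob_measure_Int_eq_1[OF \<mu>])
  then show "\<omega> \<in> certain GA pA (C_inf GA pA GB pB E qA qB)"
    unfolding certain_def C_inf_def A_def B_def by simp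
qed

theorem lemma4:
  fixes GA GB :: "('w::finite) set set"
    and pA pB :: "'w set \<Rightarrow> 'w set \<Rightarrow> real"
    and E :: "'w set" and qA qB :: real and \<omega> :: 'w
  assumes "cps GA pA" and "standing GA" and "certainty_reflection GA pA" and "one_closed GA pA"
      and "cps GB pB" and "standing GB" and "certainty_reflection GB pB" and "one_closed GB pB"
      and "0 \<le> qA" "qA \<le> 1" "0 \<le> qB" "qB \<le> 1"
      and "\<omega> \<in> C_inf GA pA GB pB E qA qB"
  shows "atom (GA \<inter> GB) \<omega> \<subseteq> C_inf GA pA GB pB E qA qB"
proof -
  let ?C = "C_inf GA pA GB pB E qA qB"
  have "self_evident GA pA ?C"
    using C_inf_self_evident_fst[OF assms(1-3,9,10)] .
  moreover have "self_evident GB pB ?C"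
    using C_inf_self_evident_fst[OF assms(5-7,11,12)] by (simp only: C_inf_swap)
  moreover have "?C \<noteq> {}"
    using assms(13) by blast
  ultimately have "?C \<in> GA \<inter> GB"
    using self_evident_mem_family[OF assms(1,2,4)] self_evident_mem_family[OF assms(5,6,8)] by blast
  then show ?thesis
    using atom_subset assms(13) by metis
qed

end
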